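(* Consider the random-subspace algorithm described in the context, and suppose that (i) the model Hessians are uniformly bounded, $\|\hat{H}_k\|\leq \kappa_H$ for all $k$, for some $\kappa_H\geq 1$; and (ii) at every iteration the computed step satisfies $$\hat{m}_k(\mathbf{0}) - \hat{m}_k(\hat{\mathbf{s}}_k) \geq \kappa_s \max\left(\|\hat{\mathbf{g}}_k\| \min\left(\Delta_k, \frac{\|\hat{\mathbf{g}}_k\|}{\max(\|\hat{H}_k\|,1)}\right), \hat{\tau}^m_k\Delta_k^2\right)$$ for some $\kappa_s>0$ independent of $k$. If at some iteration $k$ $$\Delta_k \leq c_0\, \hat{\sigma}^m_k, \qquad \text{where} \qquad c_0 := \min\left(\frac{1}{\mu}, \frac{1}{\kappa_H}, \frac{\kappa_s (1-\eta)}{\kappa_{\mathrm{ef}} \Delta_{\max}}, \frac{\kappa_s (1-\eta)}{\kappa_{\mathrm{ef}}}\right),$$ then iteration $k$ is successful, i.e. $R_k\geq \eta$ and $\hat{\sigma}^m_k\geq \mu\Delta_k$.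
   Context: Let $f:\mathbb{R}^n\to\mathbb{R}$. Fix $\mathbf{x}_0\in\mathbb{R}^n$, a subspace dimension $p\in\{1,\ldots,n\}$, radii $0<\Delta_0\leq\Delta_{\max}$, and parameters $0<\gamma_{\mathrm{dec}}<1<\gamma_{\mathrm{inc}}$, $\eta\in(0,1)$, $\mu>0$. For $k=0,1,2,\ldots$ the algorithm: (1) selects a random matrix $P_k\in\mathbb{R}^{n\times p}$; (2) builds a model $\hat{m}_k(\hat{\mathbf{s}}) = f(\mathbf{x}_k)+\hat{\mathbf{g}}_k^T\hat{\mathbf{s}}+\frac12\hat{\mathbf{s}}^T\hat{H}_k\hat{\mathbf{s}}$ ($\hat{\mathbf{g}}_k\in\mathbb{R}^p$, $\hat H_k\in\mathbb{R}^{p\times p}$ symmetric) that is $P_k$-fully quadratic, meaning there are constants $\kappa_{\mathrm{ef}},\kappa_{\mathrm{eg}},\kappa_{\mathrm{eh}}>0$ independent of $k$ with $|f(\mathbf{x}_k+P_k\hat{\mathbf{s}})-\hat m_k(\hat{\mathbf{s}})|\leq\kappa_{\mathrm{ef}}\Delta_k^3$, $\|P_k^T\nabla f(\mathbf{x}_k+P_k\hat{\mathbf{s}})-\nabla\hat m_k(\hat{\mathbf{s}})\|\leq\kappa_{\mathrm{eg}}\Delta_k^2$, $\|P_k^T\nabla^2 f(\mathbf{x}_k+P_k\hat{\mathbf{s}})P_k-\nabla^2\hat m_k(\hat{\mathbf{s}})\|\leq\kappa_{\mathrm{eh}}\Delta_k$ for all $\|\hat{\mathbf{s}}\|\leq\Delta_k$;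 (3) computes a step $\hat{\mathbf{s}}_k\in\mathbb{R}^p$ with $\|\hat{\mathbf{s}}_k\|\leq\Delta_k$ (approximately minimizing $\hat m_k$ on this ball); (4) computes $R_k := \frac{f(\mathbf{x}_k)-f(\mathbf{x}_k+P_k\hat{\mathbf{s}}_k)}{\hat m_k(\mathbf{0})-\hat m_k(\hat{\mathbf{s}}_k)}$; (5) with $\hat\tau^m_k:=\max(-\lambda_{\min}(\hat H_k),0)$ and $\hat\sigma^m_k:=\max(\|\hat{\mathbf{g}}_k\|,\hat\tau^m_k)$, iteration $k$ is successful if $R_k\geq\eta$ and $\hat\sigma^m_k\geq\mu\Delta_k$, in which case $\mathbf{x}_{k+1}=\mathbf{x}_k+P_k\hat{\mathbf{s}}_k$ and $\Delta_{k+1}=\min(\gamma_{\mathrm{inc}}\Delta_k,\Delta_{\max})$; otherwise it is unsuccessful, $\mathbf{x}_{k+1}=\mathbf{x}_k$ and $\Delta_{k+1}=\gamma_{\mathrm{dec}}\Delta_k$. Norms are Euclidean / operator 2-norms. *)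

theory Defs
  imports "HOL-Analysis.Analysis"
begin

definition qmodel :: "real \<Rightarrow> real^'p \<Rightarrow> real^'p^'p \<Rightarrow> real^'p \<Rightarrow> real" where
  "qmodel fx g H s = fx + g \<bullet> s + (1/2) * (s \<bullet> (H *v s))"

definition lambda_min :: "real^'p^'p \<Rightarrow> real" where
  "lambda_min H = Min {l. \<exists>v. v \<noteq> 0 \<and> H *v v = l *\<^sub>R v}"

definition tau_m :: "real^'p^'p \<Rightarrow> real" where
  "tau_m H = max (- lambda_min H) 0"

definition sigma_m :: "real^'p \<Rightarrow> real^'p^'p \<Rightarrow> real" where
  "sigma_m g H = max (norm g) (tau_m H)"

definition mnorm :: "real^'c^'r \<Rightarrow> real" where
  "mnorm A = onorm (\<lambda>v. A *v v)"

end

(* The actual reduction differs from the predicted one by at most the model error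
   \<kappa>ef \<Delta>\<^sup>3, whereas the sufficient-decrease condition makes the predicted reduction at
   least \<kappa>s \<sigma> \<Delta>\<^sup>2 (curvature case) or \<kappa>s \<sigma> \<Delta> (gradient case, where \<Delta> \<le> \<sigma>/\<kappa>H puts
   the Cauchy point inside the ball). The constant c0 is chosen so that in both cases the
   error is at most (1 - \<eta>) times the predicted reduction, which forces R \<ge> \<eta>; the
   term 1/\<mu> in c0 gives \<sigma> \<ge> \<mu> \<Delta> directly. *)
theory Submission
  imports Defs
begin

lemma qmodel_zero [simp]: "qmodel fx g H 0 = fx"
  by (simp add: qmodel_def)

lemma sigma_m_nonneg: "0 \<le> sigma_m g H"
  by (simp add: sigma_m_def le_max_iff_disj)

lemma radius_pos_le_max:
  fixes \<Delta> :: "nat \<Rightarrow> real"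
  assumes "0 < \<Delta> 0" "\<Delta> 0 \<le> \<Delta>max" "0 < \<gamma>dec" "\<gamma>dec < 1" "0 < \<gamma>inc"
    and "\<And>j. \<Delta> (Suc j) = min (\<gamma>inc * \<Delta> j) \<Delta>max \<or> \<Delta> (Suc j) = \<gamma>dec * \<Delta> j"
  shows "0 < \<Delta> j \<and> \<Delta> j \<le> \<Delta>max"
proof (induction j)
  case 0
  then show ?case using assms by simp
next
  case (Suc j)
  have "\<gamma>dec * \<Delta> j \<le> \<Delta> j"
    using Suc \<open>\<gamma>dec < 1\<close> by (simp add: mult_le_cancel_right1)
  then have "\<gamma>dec * \<Delta> j \<le> \<Delta>max"
    using Suc by linarith
  with Suc assms(3,5) show ?case
    using assms(6)[of j] by (auto simp: min_def)
qed

lemma ratio_ge_of_error_le: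
  fixes ared pred err \<eta> :: real
  assumes "\<bar>ared - pred\<bar> \<le> err" "err \<le> (1 - \<eta>) * pred" "0 < pred"
  shows "\<eta> \<le> ared / pred"
proof -
  have "\<eta> * pred \<le> ared"
    using assms(1,2) by (simp add: algebra_simps)
  then show ?thesis
    using \<open>0 < pred\<close> by (simp add: pos_le_divide_eq)
qed

lemma le_mult_of_le_min_mult:
  fixes D c a \<sigma> :: real
  assumes "D \<le> c * \<sigma>" "c \<le> a" "0 \<le> \<sigma>"
  shows "D \<le> a * \<sigma>"
  using assms order_trans mult_right_mono by blast

lemma cubic_error_le_model_decrease:
  fixes D gn \<tau> h Q c \<Delta>max \<kappa>H \<kappa>s \<kappa>ef \<eta> :: real
  assumes D: "0 < D" "D \<le> \<Delta>max"
    and "0 \<le> gn" "0 \<le> \<kappa>s" "0 < \<kappa>ef" "\<eta> \<le> 1"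
    and h: "h \<le> \<kappa>H" "1 \<le> \<kappa>H"
    and decrease: "\<kappa>s * max (gn * min D (gn / max h 1)) (\<tau> * D\<^sup>2) \<le> Q"
    and small: "D \<le> c * max gn \<tau>"
    and c: "c \<le> 1 / \<kappa>H" "c \<le> \<kappa>s * (1 - \<eta>) / (\<kappa>ef * \<Delta>max)" "c \<le> \<kappa>s * (1 - \<eta>) / \<kappa>ef"
  shows "\<kappa>ef * D ^ 3 \<le> (1 - \<eta>) * Q"
proof (cases "\<tau> \<le> gn")
  case True
  then have \<sigma>: "max gn \<tau> = gn" by simp
  have "D \<le> gn / \<kappa>H"
    using le_mult_of_le_min_mult[OF small c(1)] \<sigma> \<open>0 \<le> gn\<close> by simp
  also have "\<dots> \<le> gn / max h 1"
    using h \<open>0 \<le> gn\<close> by (intro divide_left_mono) auto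
  finally have cauchy: "\<kappa>s * (gn * D) \<le> Q"
    using decrease \<open>0 \<le> \<kappa>s\<close> by (smt (verit) max.cobounded1 min_absorb1 mult_left_mono)
  have "D \<le> \<kappa>s * (1 - \<eta>) / (\<kappa>ef * \<Delta>max) * gn"
    using le_mult_of_le_min_mult[OF small c(2)] \<sigma> \<open>0 \<le> gn\<close> by simp
  then have "\<kappa>ef * \<Delta>max * D \<le> \<kappa>s * (1 - \<eta>) * gn"
    using D \<open>0 < \<kappa>ef\<close> by (simp add: field_simps)
  moreover have "\<kappa>ef * D * D \<le> \<kappa>ef * \<Delta>max * D"
    using D \<open>0 < \<kappa>ef\<close> by (simp add: mult_right_mono)
  ultimately have "\<kappa>ef * D * D * D \<le> \<kappa>s * (1 - \<eta>) * gn * D"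
    using D by (simp add: mult_right_mono)
  also have "\<dots> \<le> (1 - \<eta>) * Q"
    using cauchy \<open>\<eta> \<le> 1\<close> by (smt (verit) mult.assoc mult.commute mult_left_mono)
  finally show ?thesis
    by (simp add: power3_eq_cube)
next
  case False
  then have \<sigma>: "max gn \<tau> = \<tau>" by simp
  have curvature: "\<kappa>s * (\<tau> * D\<^sup>2) \<le> Q"
    using decrease \<open>0 \<le> \<kappa>s\<close> by (smt (verit) max.cobounded2 mult_left_mono)
  have "D \<le> \<kappa>s * (1 - \<eta>) / \<kappa>ef * \<tau>"
    using le_mult_of_le_min_mult[OF small c(3)] \<sigma> False \<open>0 \<le> gn\<close> by simp
  then have "\<kappa>ef * D \<le> \<kappa>s * (1 - \<eta>) * \<tau>"
    using \<open>0 < \<kappa>ef\<close> by (simp add: field_simps)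
  then have "\<kappa>ef * D * D\<^sup>2 \<le> \<kappa>s * (1 - \<eta>) * \<tau> * D\<^sup>2"
    by (simp add: mult_right_mono)
  also have "\<dots> \<le> (1 - \<eta>) * Q"
    using curvature \<open>\<eta> \<le> 1\<close> by (smt (verit) mult.assoc mult.commute mult_left_mono)
  finally show ?thesis
    by (simp add: power3_eq_cube power2_eq_square mult.assoc)
qed

theorem lemma3p5:
  fixes f :: "real^'n \<Rightarrow> real"
    and gradf :: "real^'n \<Rightarrow> real^'n"
    and hessf :: "real^'n \<Rightarrow> real^'n^'n"
    and x :: "nat \<Rightarrow> real^'n"
    and P :: "nat \<Rightarrow> real^'p^'n"
    and g :: "nat \<Rightarrow> real^'p"
    and H :: "nat \<Rightarrow> real^'p^'p"
    and s :: "nat \<Rightarrow> real^'p"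
    and \<Delta> :: "nat \<Rightarrow> real"
    and x0 :: "real^'n"
    and \<Delta>0 \<Delta>max \<gamma>dec \<gamma>inc \<eta> \<mu> \<kappa>ef \<kappa>eg \<kappa>eh \<kappa>H \<kappa>s :: real
    and R :: "nat \<Rightarrow> real"
    and k :: nat
  assumes p_le_n: "CARD('p) \<le> CARD('n)"
    and grad: "\<And>y. (f has_derivative (\<lambda>h. gradf y \<bullet> h)) (at y)"
    and hess: "\<And>y. (gradf has_derivative (\<lambda>h. hessf y *v h)) (at y)"
    and radii: "0 < \<Delta>0" "\<Delta>0 \<le> \<Delta>max"
    and gammas: "0 < \<gamma>dec" "\<gamma>dec < 1" "1 < \<gamma>inc"
    and eta: "0 < \<eta>" "\<eta> < 1"
    and mu: "0 < \<mu>"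
    and kappas: "0 < \<kappa>ef" "0 < \<kappa>eg" "0 < \<kappa>eh"
    and init: "x 0 = x0" "\<Delta> 0 = \<Delta>0"
    and Hsym: "\<And>j. transpose (H j) = H j"
    and fq_f: "\<And>j sh. norm sh \<le> \<Delta> j \<Longrightarrow>
       \<bar>f (x j + P j *v sh) - qmodel (f (x j)) (g j) (H j) sh\<bar> \<le> \<kappa>ef * \<Delta> j ^ 3"
    and fq_g: "\<And>j sh. norm sh \<le> \<Delta> j \<Longrightarrow>
       norm (transpose (P j) *v gradf (x j + P j *v sh) - (g j + H j *v sh)) \<le> \<kappa>eg * \<Delta> j ^ 2"
    and fq_h: "\<And>j sh. norm sh \<le> \<Delta> j \<Longrightarrow>
       mnorm (transpose (P j) ** hessf (x j + P j *v sh) ** P j - H j) \<le> \<kappa>eh * \<Delta> j"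
    and step_tr: "\<And>j. norm (s j) \<le> \<Delta> j"
    and R_def: "\<And>j. R j = (f (x j) - f (x j + P j *v s j)) /
       (qmodel (f (x j)) (g j) (H j) 0 - qmodel (f (x j)) (g j) (H j) (s j))"
    and upd_succ: "\<And>j. R j \<ge> \<eta> \<and> sigma_m (g j) (H j) \<ge> \<mu> * \<Delta> j \<Longrightarrow>
       x (Suc j) = x j + P j *v s j \<and> \<Delta> (Suc j) = min (\<gamma>inc * \<Delta> j) \<Delta>max"
    and upd_fail: "\<And>j. \<not> (R j \<ge> \<eta> \<and> sigma_m (g j) (H j) \<ge> \<mu> * \<Delta> j) \<Longrightarrow>
       x (Suc j) = x j \<and> \<Delta> (Suc j) = \<gamma>dec * \<Delta> j"
    and kH: "1 \<le> \<kappa>H"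
    and Hbound: "\<And>j. mnorm (H j) \<le> \<kappa>H"
    and ks: "0 < \<kappa>s"
    and decrease: "\<And>j. qmodel (f (x j)) (g j) (H j) 0 - qmodel (f (x j)) (g j) (H j) (s j)
       \<ge> \<kappa>s * max (norm (g j) * min (\<Delta> j) (norm (g j) / max (mnorm (H j)) 1))
                    (tau_m (H j) * \<Delta> j ^ 2)"
    and small: "\<Delta> k \<le> min (min (1/\<mu>) (1/\<kappa>H))
                  (min (\<kappa>s * (1 - \<eta>) / (\<kappa>ef * \<Delta>max)) (\<kappa>s * (1 - \<eta>) / \<kappa>ef))
                * sigma_m (g k) (H k)"
  shows "R k \<ge> \<eta> \<and> sigma_m (g k) (H k) \<ge> \<mu> * \<Delta> k"
proof -
  define D where "D = \<Delta> k"
  define \<sigma> where "\<sigma> = sigma_m (g k) (H k)"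
  define Q where "Q = qmodel (f (x k)) (g k) (H k) 0 - qmodel (f (x k)) (g k) (H k) (s k)"
  have "\<Delta> (Suc j) = min (\<gamma>inc * \<Delta> j) \<Delta>max \<or> \<Delta> (Suc j) = \<gamma>dec * \<Delta> j" for j
    using upd_succ[of j] upd_fail[of j] by blast
  then have "0 < D \<and> D \<le> \<Delta>max"
    unfolding D_def using radii gammas init by (intro radius_pos_le_max[of _ _ \<gamma>dec \<gamma>inc]) auto
  then have D: "0 < D" "D \<le> \<Delta>max" by auto
  have small_unfolded: "D \<le> min (min (1/\<mu>) (1/\<kappa>H))
      (min (\<kappa>s * (1 - \<eta>) / (\<kappa>ef * \<Delta>max)) (\<kappa>s * (1 - \<eta>) / \<kappa>ef)) * max (norm (g k)) (tau_m (H k))"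
    using small by (simp add: D_def sigma_m_def)
  have "D \<le> 1 / \<mu> * \<sigma>"
    unfolding D_def \<sigma>_def by (rule le_mult_of_le_min_mult[OF small _ sigma_m_nonneg]) simp
  then have radius_le_sigma: "\<mu> * D \<le> \<sigma>"
    using mu by (simp add: field_simps)
  have Q_ge: "\<kappa>ef * D ^ 3 \<le> (1 - \<eta>) * Q"
    using D eta kappas ks kH Hbound[of k] decrease[of k] small_unfolded
    by (intro cubic_error_le_model_decrease) (auto simp: Q_def D_def min_le_iff_disj)
  have "0 < (1 - \<eta>) * Q"
    using Q_ge D kappas by (smt (verit) zero_less_power mult_pos_pos)
  then have "0 < Q"
    using eta by (simp add: zero_less_mult_iff)
  moreover have "\<bar>(f (x k) - f (x k + P k *v s k)) - Q\<bar> \<le> \<kappa>ef * D ^ 3"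
    using fq_f[OF step_tr[of k]] by (simp add: Q_def D_def abs_minus_commute)
  ultimately have "\<eta> \<le> R k"
    using ratio_ge_of_error_le Q_ge R_def[of k] by (simp add: Q_def)
  then show ?thesis
    using radius_le_sigma by (simp add: D_def \<sigma>_def)
qed

end
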